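(* Let $G$ be a countably based profinite group with normalised Haar measure $\mu$, let $x\in G$, and let $(N_i)_{i\geq1}$ be a descending chain of open normal subgroups of $G$ with $\bigcap_i N_i=1$. Define $c_1(x)=\sup_{i\geq1}|C_{G/N_i}(xN_i)|$, $c_2(x)=\sup_{N\trianglelefteq_o G}|C_{G/N}(xN)|$, and $c_3(x)=\sup_{K\trianglelefteq G}|C_{G/K}(xK)|$ (with $K$ ranging over closed normal subgroups, and $c_3(x)=\infty$ if some $C_{G/K}(xK)$ is infinite). Then $c_1(x)=c_2(x)=c_3(x)=:c(x)$ and $\mu(x^G)=1/c(x)$ (interpreted as $0$ if $c(x)=\infty$), where $x^G=\{g^{-1}xg: g\in G\}$.
   Context: $N\trianglelefteq_o G$ means $N$ is an open normal subgroup of $G$. *)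

theory Defs
  imports "HOL-Analysis.Analysis" "HOL-Probability.Probability" "HOL-Algebra.Algebra"
begin

definition topological_group :: "('a, 'b) monoid_scheme \<Rightarrow> 'a topology \<Rightarrow> bool" where
  "topological_group G T \<longleftrightarrow> group G \<and> topspace T = carrier G \<and>
     continuous_map (prod_topology T T) T (\<lambda>(x, y). x \<otimes>\<^bsub>G\<^esub> y) \<and>
     continuous_map T T (\<lambda>x. inv\<^bsub>G\<^esub> x)"

definition totally_disconnected_space :: "'a topology \<Rightarrow> bool" where
  "totally_disconnected_space T \<longleftrightarrow>
     (\<forall>x \<in> topspace T. connected_component_of_set T x = {x})"

definition profinite_group :: "('a, 'b) monoid_scheme \<Rightarrow> 'a topology \<Rightarrow> bool" where
  "profinite_group G T \<longleftrightarrow> topological_group G T \<and> compact_space T \<and>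
     Hausdorff_space T \<and> totally_disconnected_space T"

definition borel_sets_of :: "'a topology \<Rightarrow> 'a set set" where
  "borel_sets_of T = sigma_sets (topspace T) {U. openin T U}"

definition normalised_haar_measure :: "('a, 'b) monoid_scheme \<Rightarrow> 'a topology \<Rightarrow> 'a measure \<Rightarrow> bool" where
  "normalised_haar_measure G T M \<longleftrightarrow> prob_space M \<and> space M = carrier G \<and>
     sets M = borel_sets_of T \<and>
     (\<forall>g \<in> carrier G. \<forall>A \<in> sets M. measure M (g <#\<^bsub>G\<^esub> A) = measure M A)"

definition centraliser :: "('c, 'd) monoid_scheme \<Rightarrow> 'c \<Rightarrow> 'c set" where
  "centraliser H y = {z \<in> carrier H. z \<otimes>\<^bsub>H\<^esub> y = y \<otimes>\<^bsub>H\<^esub> z}"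

definition ecard :: "'c set \<Rightarrow> enat" where
  "ecard S = (if finite S then enat (card S) else \<infinity>)"

definition quot_centraliser_card :: "('a, 'b) monoid_scheme \<Rightarrow> 'a set \<Rightarrow> 'a \<Rightarrow> enat" where
  "quot_centraliser_card G K x = ecard (centraliser (G Mod K) (K #>\<^bsub>G\<^esub> x))"

definition conj_class :: "('a, 'b) monoid_scheme \<Rightarrow> 'a \<Rightarrow> 'a set" where
  "conj_class G x = {inv\<^bsub>G\<^esub> g \<otimes>\<^bsub>G\<^esub> x \<otimes>\<^bsub>G\<^esub> g | g. g \<in> carrier G}"

end

theory Submission
  imports Defs
begin

(*
  For an open normal subgroup L, the set L x^G is the union of the conjugacy class of xL in the
  finite group G/L. By orbit-stabiliser this class consists of |G/L| / |C_{G/L}(xL)| cosets of L,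
  each of Haar measure 1/|G/L|, so mu(L x^G) = 1/|C_{G/L}(xL)|; in particular |C_{G/L}(xL)| can
  only grow as L shrinks. By compactness every closed set A is the intersection of the sets N_i A.
  For A = x^G, continuity of mu from above gives mu(x^G) = lim 1/|C_{G/N_i}(xN_i)|. For a closed
  normal K, finitely many distinct cosets of K stay distinct modulo the open normal subgroup N_i K
  for large i, and cosets centralising xK map to cosets centralising x N_i K; this bounds
  |C_{G/K}(xK)| by the supremum over the chain.
*)

lemma (in group) conj_class_subset_carrier:
  assumes "u \<in> carrier G"
  shows "conj_class G u \<subseteq> carrier G"
  using assms by (auto simp: conj_class_def)

lemma (in group) card_conj_class_mult_card_centraliser:
  assumes "u \<in> carrier G"
  shows "card (conj_class G u) * card (centraliser G u) = order G"
proof -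
  let ?\<phi> = "\<lambda>g. \<lambda>h \<in> carrier G. g \<otimes> h \<otimes> inv g"
  have "orbit G ?\<phi> u = conj_class G u"
    unfolding orbit_def conj_class_def using assms
    by (auto; metis inv_closed inv_inv)
  moreover have "stabilizer G ?\<phi> u = centraliser G u"
    unfolding stabilizer_def centraliser_def using assms
    by (auto simp: inv_solve_right')
  ultimately show ?thesis
    using group_action.orbit_stabilizer_theorem[OF action_by_conjugation assms] by simp
qed

lemma (in group) card_centraliser_pos:
  assumes "finite (carrier G)" "u \<in> carrier G"
  shows "card (centraliser G u) > 0"
  using card_conj_class_mult_card_centraliser[OF assms(2)] assms(1)
  by (metis order_gt_0_iff_finite mult_is_0 neq0_conv)

lemma (in group) rcos_eq_iff:
  assumes "subgroup H G" "x \<in> carrier G" "y \<in> carrier G"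
  shows "H #> x = H #> y \<longleftrightarrow> x \<otimes> inv y \<in> H"
  using assms coset_join1 coset_join2 coset_mult_inv1 coset_mult_inv2 inv_closed m_closed subgroup.subset
  by meson

lemma (in group) normal_set_mult:
  assumes "K \<lhd> G" "H \<lhd> G"
  shows "K <#> H \<lhd> G"
  unfolding normal_inv_iff
proof
  show "subgroup (K <#> H) G"
    using assms(1) by (rule mult_norm_subgroup) (use assms(2) normal_imp_subgroup in blast)
  show "\<forall>x\<in>carrier G. \<forall>z\<in>K <#> H. x \<otimes> z \<otimes> inv x \<in> K <#> H"
  proof (intro ballI)
    fix x z assume x: "x \<in> carrier G" and z: "z \<in> K <#> H"
    obtain k h where kh: "k \<in> K" "h \<in> H" "z = k \<otimes> h"
      using z unfolding set_mult_def by blast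
    have kc: "k \<in> carrier G" and hc: "h \<in> carrier G"
      using kh(1,2) assms[THEN normal_imp_subgroup, THEN subgroup.mem_carrier] by auto
    have "(x \<otimes> k \<otimes> inv x) \<otimes> (x \<otimes> h \<otimes> inv x) = x \<otimes> k \<otimes> (inv x \<otimes> x) \<otimes> h \<otimes> inv x"
      using x kc hc by (simp only: m_assoc m_closed inv_closed)
    also have "\<dots> = x \<otimes> z \<otimes> inv x"
      using x kc hc kh(3) by (simp add: m_assoc[of x k h])
    finally have "x \<otimes> z \<otimes> inv x = (x \<otimes> k \<otimes> inv x) \<otimes> (x \<otimes> h \<otimes> inv x)" ..
    moreover have "x \<otimes> k \<otimes> inv x \<in> K" "x \<otimes> h \<otimes> inv x \<in> H"
      using normal.inv_op_closed2[OF assms(1) x kh(1)] normal.inv_op_closed2[OF assms(2) x kh(2)] .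
    ultimately show "x \<otimes> z \<otimes> inv x \<in> K <#> H" unfolding set_mult_def by blast
  qed
qed

context normal
begin

lemma rcos_mem_centraliser_iff:
  assumes "g \<in> carrier G" "x \<in> carrier G"
  shows "H #> g \<in> centraliser (G Mod H) (H #> x) \<longleftrightarrow> H #> (g \<otimes> x) = H #> (x \<otimes> g)"
  using assms by (simp add: centraliser_def FactGroup_def rcos_sum rcosetsI subset)

lemma set_mult_conj_class_eq_Union:
  assumes "x \<in> carrier G"
  shows "H <#> conj_class G x = \<Union>(conj_class (G Mod H) (H #> x))"
proof -
  have conj_rcos: "inv\<^bsub>G Mod H\<^esub> (H #> g) \<otimes>\<^bsub>G Mod H\<^esub> (H #> x) \<otimes>\<^bsub>G Mod H\<^esub> (H #> g)
      = H #> (inv g \<otimes> x \<otimes> g)" if "g \<in> carrier G" for g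
    using that assms by (simp add: inv_FactGroup carrier_FactGroup rcos_inv rcos_sum)
  have "conj_class (G Mod H) (H #> x)
      = (\<lambda>q. inv\<^bsub>G Mod H\<^esub> q \<otimes>\<^bsub>G Mod H\<^esub> (H #> x) \<otimes>\<^bsub>G Mod H\<^esub> q) ` carrier (G Mod H)"
    by (auto simp: conj_class_def)
  also have "\<dots> = (\<lambda>g. H #> (inv g \<otimes> x \<otimes> g)) ` carrier G"
    unfolding carrier_FactGroup image_image by (rule image_cong[OF refl conj_rcos])
  finally have quotient_class: "conj_class (G Mod H) (H #> x) = (\<lambda>g. H #> (inv g \<otimes> x \<otimes> g)) ` carrier G" .
  have "conj_class G x = (\<lambda>g. inv g \<otimes> x \<otimes> g) ` carrier G"
    by (auto simp: conj_class_def)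
  then have "H <#> conj_class G x = (\<Union>g\<in>carrier G. H #> (inv g \<otimes> x \<otimes> g))"
    by (auto simp: set_mult_def r_coset_def)
  then show ?thesis
    by (simp add: quotient_class)
qed

end

lemma (in group) centraliser_FactGroup_mono:
  assumes "K \<lhd> G" "L \<lhd> G" "K \<subseteq> L" "g \<in> carrier G" "x \<in> carrier G"
    and "K #> g \<in> centraliser (G Mod K) (K #> x)"
  shows "L #> g \<in> centraliser (G Mod L) (L #> x)"
proof -
  have sub: "subgroup K G" "subgroup L G" using assms(1,2) normal_imp_subgroup by blast+
  have "K #> (g \<otimes> x) = K #> (x \<otimes> g)"
    using normal.rcos_mem_centraliser_iff[OF assms(1,4,5)] assms(6) by simp
  then have "(g \<otimes> x) \<otimes> inv (x \<otimes> g) \<in> L"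
    using rcos_eq_iff[OF sub(1)] assms(3-5) by auto
  then show ?thesis
    using normal.rcos_mem_centraliser_iff[OF assms(2,4,5)] rcos_eq_iff[OF sub(2)] assms(4,5) by simp
qed

lemma ecard_leI:
  assumes "\<And>F. finite F \<Longrightarrow> F \<subseteq> S \<Longrightarrow> enat (card F) \<le> c"
  shows "ecard S \<le> c"
proof (cases "finite S")
  case True
  then show ?thesis using assms[of S] by (simp add: ecard_def)
next
  case False
  have "enat n \<le> c" for n
    using infinite_arbitrarily_large[OF False, of n] assms by blast
  then have "c = \<infinity>"
  proof (cases c)
    case (enat k)
    then show ?thesis using \<open>\<And>n. enat n \<le> c\<close>[of "Suc k"] by simp
  qed simp
  then show ?thesis by simp
qed

lemma incseq_nat_bounded_stabilises:
  fixes b :: "nat \<Rightarrow> nat"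
  assumes "incseq b" "bdd_above (range b)"
  obtains n0 where "\<And>n. b n \<le> b n0" "\<And>n. n \<ge> n0 \<Longrightarrow> b n = b n0"
proof -
  obtain M where "\<forall>x\<in>range b. x \<le> M" using assms(2) unfolding bdd_above_def by blast
  then have "range b \<subseteq> {..M}" by auto
  then have fin: "finite (range b)" using finite_subset by blast
  obtain n0 where n0: "b n0 = Max (range b)"
    using Max_in[OF fin] by auto
  have le: "b n \<le> b n0" for n
    using Max_ge[OF fin, of "b n"] n0 by simp
  moreover have "b n = b n0" if "n \<ge> n0" for n
    using le[of n] incseqD[OF assms(1) that] by (rule antisym)
  ultimately show ?thesis using that by blast
qed

lemma LIMSEQ_one_divide_incseq:
  fixes b :: "nat \<Rightarrow> nat"
  assumes "incseq b"
  shows "(\<lambda>n. 1 / real (b n)) \<longlonglongrightarrow>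
    (let c = SUP n. enat (b n) in if c = \<infinity> then 0 else 1 / real (the_enat c))"
proof (cases "bdd_above (range b)")
  case True
  then obtain n0 where le: "\<And>n. b n \<le> b n0" and const: "\<And>n. n \<ge> n0 \<Longrightarrow> b n = b n0"
    using incseq_nat_bounded_stabilises[OF assms] by blast
  have "(SUP n. enat (b n)) = enat (b n0)"
    using le by (intro antisym SUP_least SUP_upper2[of n0]) simp_all
  moreover have "(\<lambda>n. 1 / real (b n)) \<longlonglongrightarrow> 1 / real (b n0)"
  proof (rule Lim_transform_eventually[OF tendsto_const], rule eventually_sequentiallyI)
    fix n assume "n0 \<le> n"
    then show "1 / real (b n0) = 1 / real (b n)" using const[of n] by simp
  qed
  ultimately show ?thesis by simp
next
  case False
  have unbounded: "\<exists>n. k < b n" for k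
  proof (rule ccontr)
    assume "\<not> (\<exists>n. k < b n)"
    then have "bdd_above (range b)" by (intro bdd_aboveI2[of _ _ k]) (simp add: not_less)
    then show False using False by simp
  qed
  have "(SUP n. enat (b n)) = \<infinity>"
  proof (rule ccontr)
    assume "(SUP n. enat (b n)) \<noteq> \<infinity>"
    then obtain k where k: "(SUP n. enat (b n)) = enat k" by (cases "SUP n. enat (b n)") auto
    obtain n where "k < b n" using unbounded by blast
    moreover have "enat (b n) \<le> (SUP n. enat (b n))" by (rule SUP_upper) simp
    ultimately show False using k by simp
  qed
  moreover have "(\<lambda>n. inverse (real (b n))) \<longlonglongrightarrow> 0"
  proof (rule LIMSEQ_inverse_zero)
    fix r :: real
    obtain n0 where "nat \<lceil>r\<rceil> < b n0" using unbounded by blast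
    then have "r < real (b n)" if "n \<ge> n0" for n
      using incseqD[OF assms that] by linarith
    then show "\<exists>n0. \<forall>n\<ge>n0. r < real (b n)" by blast
  qed
  ultimately show ?thesis by (simp add: inverse_eq_divide)
qed

locale group_topology = group G for G (structure) +
  fixes T :: "'a topology"
  assumes topological_group: "topological_group G T"
begin

lemma topspace_eq: "topspace T = carrier G"
  using topological_group by (simp add: topological_group_def)

lemma continuous_map_mult:
  assumes "continuous_map T T f" "continuous_map T T g"
  shows "continuous_map T T (\<lambda>z. f z \<otimes> g z)"
  using continuous_map_compose[OF continuous_map_pairedI[OF assms], of T "\<lambda>(x, y). x \<otimes> y"]
    topological_group
  by (simp add: topological_group_def o_def)

lemma continuous_map_inv:
  assumes "continuous_map T T f"
  shows "continuous_map T T (\<lambda>z. inv (f z))"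
  using continuous_map_compose[OF assms, of T "\<lambda>x. inv x"] topological_group
  by (simp add: topological_group_def o_def)

lemma continuous_map_conj:
  assumes "x \<in> carrier G"
  shows "continuous_map T T (\<lambda>g. inv g \<otimes> x \<otimes> g)"
  using assms
  by (intro continuous_map_mult continuous_map_inv continuous_map_id[unfolded id_def])
     (simp_all add: topspace_eq)

lemma r_coset_eq_preimage:
  assumes "U \<subseteq> carrier G" "g \<in> carrier G"
  shows "U #> g = {z \<in> topspace T. z \<otimes> inv g \<in> U}"
proof -
  have "z \<in> U #> g \<longleftrightarrow> z \<in> carrier G \<and> z \<otimes> inv g \<in> U" for z
  proof
    assume "z \<in> U #> g"
    then obtain u where "u \<in> U" "z = u \<otimes> g" unfolding r_coset_def by blast
    then show "z \<in> carrier G \<and> z \<otimes> inv g \<in> U"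
      using assms by (auto simp: m_assoc)
  next
    assume z: "z \<in> carrier G \<and> z \<otimes> inv g \<in> U"
    then have "z = (z \<otimes> inv g) \<otimes> g" using assms by (simp add: m_assoc)
    then show "z \<in> U #> g" using z unfolding r_coset_def by blast
  qed
  then show ?thesis by (auto simp: topspace_eq)
qed

lemma openin_r_coset:
  assumes "openin T U" "g \<in> carrier G"
  shows "openin T (U #> g)"
proof -
  have "continuous_map T T (\<lambda>z. z \<otimes> inv g)"
    using assms(2) by (intro continuous_map_mult continuous_map_id[unfolded id_def]) (simp add: topspace_eq)
  moreover have "U #> g = {z \<in> topspace T. z \<otimes> inv g \<in> U}"
    using r_coset_eq_preimage[OF openin_subset[OF assms(1), unfolded topspace_eq] assms(2)] .
  ultimately show ?thesis
    using openin_continuous_map_preimage assms(1) by simp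
qed

lemma closedin_r_coset:
  assumes "closedin T U" "g \<in> carrier G"
  shows "closedin T (U #> g)"
proof -
  have "continuous_map T T (\<lambda>z. z \<otimes> inv g)"
    using assms(2) by (intro continuous_map_mult continuous_map_id[unfolded id_def]) (simp add: topspace_eq)
  moreover have "U #> g = {z \<in> topspace T. z \<otimes> inv g \<in> U}"
    using r_coset_eq_preimage[OF closedin_subset[OF assms(1), unfolded topspace_eq] assms(2)] .
  ultimately show ?thesis
    using closedin_continuous_map_preimage assms(1) by simp
qed

lemma openin_set_mult:
  assumes "openin T U" "A \<subseteq> carrier G"
  shows "openin T (U <#> A)"
proof -
  have "U <#> A = (\<Union>a\<in>A. U #> a)"
    unfolding set_mult_def r_coset_def by blast
  moreover have "openin T (U #> a)" if "a \<in> A" for a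
    using openin_r_coset[OF assms(1)] that assms(2) by blast
  ultimately show ?thesis
    by auto
qed

lemma closedin_open_subgroup:
  assumes "subgroup H G" "openin T H"
  shows "closedin T H"
proof -
  have "H <#> (carrier G - H) = carrier G - H"
  proof (intro equalityI subsetI)
    fix z assume "z \<in> H <#> (carrier G - H)"
    then obtain h a where ha: "h \<in> H" "a \<in> carrier G" "a \<notin> H" "z = h \<otimes> a"
      unfolding set_mult_def by blast
    have "inv h \<otimes> z = a"
      using ha subgroup.mem_carrier[OF assms(1)] by (simp add: m_assoc[symmetric])
    have "z \<notin> H"
    proof
      assume "z \<in> H"
      then have "inv h \<otimes> z \<in> H"
        using ha(1) subgroup.m_closed[OF assms(1)] subgroup.m_inv_closed[OF assms(1)] by simp
      then show False using \<open>inv h \<otimes> z = a\<close> ha(3) by simp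
    qed
    then show "z \<in> carrier G - H"
      using ha subgroup.mem_carrier[OF assms(1)] by simp
  next
    fix z assume "z \<in> carrier G - H"
    then have "z = \<one> \<otimes> z" "\<one> \<in> H"
      using subgroup.one_closed[OF assms(1)] by simp_all
    then show "z \<in> H <#> (carrier G - H)"
      using \<open>z \<in> carrier G - H\<close> unfolding set_mult_def by blast
  qed
  then have "openin T (carrier G - H)"
    using openin_set_mult[OF assms(2), of "carrier G - H"] by simp
  then show ?thesis
    using subgroup.subset[OF assms(1)] by (simp add: closedin_def topspace_eq)
qed

end

locale compact_group = group_topology +
  assumes compact: "compact_space T" and Hausdorff: "Hausdorff_space T"
begin

lemma finite_rcosets_open_subgroup:
  assumes "subgroup H G" "openin T H"
  shows "finite (rcosets H)"
proof -
  have "\<forall>R\<in>rcosets H. openin T R"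
    using openin_r_coset[OF assms(2)] by (auto simp: RCOSETS_def)
  moreover have "topspace T \<subseteq> \<Union>(rcosets H)"
    using rcosets_part_G[OF assms(1)] by (simp add: topspace_eq)
  ultimately obtain \<F> where \<F>: "finite \<F>" "\<F> \<subseteq> rcosets H" "topspace T \<subseteq> \<Union>\<F>"
    using compact unfolding compact_space_alt by meson
  have "rcosets H \<subseteq> \<F>"
  proof
    fix R assume R: "R \<in> rcosets H"
    then obtain g where g: "g \<in> R" "g \<in> carrier G"
      using subgroup.rcosets_non_empty[OF assms(1) R] rcosets_part_G[OF assms(1)] by blast
    then obtain R' where "R' \<in> \<F>" "g \<in> R'"
      using \<F>(3) by (auto simp: topspace_eq)
    then have "R' = R"
      using rcos_disjoint[OF assms(1)] \<F>(2) R g(1) unfolding pairwise_def disjnt_def by blast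
    then show "R \<in> \<F>" using \<open>R' \<in> \<F>\<close> by simp
  qed
  then show ?thesis using \<F>(1) finite_subset by blast
qed

lemma finite_carrier_FactGroup:
  assumes "H \<lhd> G" "openin T H"
  shows "finite (carrier (G Mod H))"
  using finite_rcosets_open_subgroup[OF normal_imp_subgroup[OF assms(1)] assms(2)]
  by (simp add: FactGroup_def)

lemma closedin_conj_class:
  assumes "x \<in> carrier G"
  shows "closedin T (conj_class G x)"
proof -
  have "conj_class G x = (\<lambda>g. inv g \<otimes> x \<otimes> g) ` topspace T"
    by (auto simp: conj_class_def topspace_eq)
  moreover have "compactin T ((\<lambda>g. inv g \<otimes> x \<otimes> g) ` topspace T)"
    by (rule image_compactin[OF compact[unfolded compact_space_def] continuous_map_conj[OF assms]])
  ultimately show ?thesis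
    using compactin_imp_closedin[OF Hausdorff] by simp
qed

end

locale open_normal_chain = compact_group +
  fixes N :: "nat \<Rightarrow> 'a set"
  assumes normal_chain: "\<And>i. N i \<lhd> G"
    and openin_chain: "\<And>i. openin T (N i)"
    and chain_Suc_subset: "\<And>i. N (Suc i) \<subseteq> N i"
    and Inter_chain: "(\<Inter>i. N i) = {\<one>}"
begin

lemma subgroup_chain: "subgroup (N i) G"
  by (rule normal_imp_subgroup[OF normal_chain])

lemma decseq_chain: "decseq N"
  using chain_Suc_subset by (rule decseq_SucI)

lemma Inter_chain_r_coset:
  assumes "y \<in> carrier G"
  shows "(\<Inter>i. N i #> y) = {y}"
proof (intro equalityI subsetI)
  fix z assume "z \<in> (\<Inter>i. N i #> y)"
  then have z: "z \<in> carrier G" "z \<otimes> inv y \<in> (\<Inter>i. N i)"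
    using r_coset_eq_preimage[OF subgroup.subset[OF subgroup_chain] assms] by (auto simp: topspace_eq)
  then have "z \<otimes> inv y = \<one>" using Inter_chain by simp
  then show "z \<in> {y}"
    using z(1) assms by (metis inv_equality inv_inv inv_closed singletonI)
next
  fix z assume "z \<in> {y}"
  then show "z \<in> (\<Inter>i. N i #> y)" using rcos_self[OF assms subgroup_chain] by simp
qed

lemma Inter_chain_set_mult:
  assumes "closedin T A"
  shows "(\<Inter>i. N i <#> A) = A"
proof
  have A: "A \<subseteq> carrier G"
    using closedin_subset[OF assms] by (simp add: topspace_eq)
  show "A \<subseteq> (\<Inter>i. N i <#> A)"
  proof
    fix y assume y: "y \<in> A"
    then have "y = \<one> \<otimes> y" using A by auto
    then show "y \<in> (\<Inter>i. N i <#> A)"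
      using y subgroup.one_closed[OF subgroup_chain] unfolding set_mult_def by blast
  qed
  show "(\<Inter>i. N i <#> A) \<subseteq> A"
  proof
    fix y assume y: "y \<in> (\<Inter>i. N i <#> A)"
    have yc: "y \<in> carrier G"
      using y setmult_subset_G[OF subgroup.subset[OF subgroup_chain] A] by blast
    have "(\<Inter>i. A \<inter> (N i #> y)) \<noteq> {}"
    proof (rule compact_space_imp_nest[OF compact])
      show "closedin T (A \<inter> (N i #> y))" for i
        using assms closedin_r_coset[OF closedin_open_subgroup[OF subgroup_chain openin_chain] yc]
        by (rule closedin_Int)
      show "A \<inter> (N i #> y) \<noteq> {}" for i
      proof -
        obtain n a where na: "n \<in> N i" "a \<in> A" "y = n \<otimes> a"
          using y unfolding set_mult_def by blast
        then have "a = inv n \<otimes> y"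
          using A subgroup.mem_carrier[OF subgroup_chain] by (auto simp: m_assoc[symmetric])
        then have "a \<in> N i #> y"
          using na(1) subgroup.m_inv_closed[OF subgroup_chain] unfolding r_coset_def by blast
        then show ?thesis using na(2) by blast
      qed
      show "decseq (\<lambda>i. A \<inter> (N i #> y))"
        using chain_Suc_subset by (intro decseq_SucI) (auto simp: r_coset_def)
    qed
    then obtain z where z: "z \<in> A" "\<And>i. z \<in> N i #> y" by blast
    then have "z = y" using Inter_chain_r_coset[OF yc] by blast
    then show "y \<in> A" using z(1) by simp
  qed
qed

lemma eventually_notin_chain_set_mult:
  assumes "closedin T A" "y \<notin> A"
  shows "\<forall>\<^sub>F i in sequentially. y \<notin> N i <#> A"
proof -
  obtain i where "y \<notin> N i <#> A"
    using Inter_chain_set_mult[OF assms(1)] assms(2) by blast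
  moreover have "N j <#> A \<subseteq> N i <#> A" if "i \<le> j" for j
    using mono_set_mult[OF decseqD[OF decseq_chain that] order_refl] .
  ultimately show ?thesis
    unfolding eventually_sequentially by blast
qed

end

locale haar_group = compact_group +
  fixes \<mu> :: "'a measure"
  assumes haar: "normalised_haar_measure G T \<mu>"
begin

lemma prob_space_haar: "prob_space \<mu>"
  using haar by (simp add: normalised_haar_measure_def)

lemma openin_sets_haar:
  assumes "openin T U"
  shows "U \<in> sets \<mu>"
  using haar assms unfolding normalised_haar_measure_def borel_sets_of_def by simp

lemma measure_Union_rcosets:
  assumes L: "L \<lhd> G" "openin T L" and \<C>: "\<C> \<subseteq> carrier (G Mod L)"
  shows "measure \<mu> (\<Union>\<C>) = real (card \<C>) * measure \<mu> L"
proof -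
  interpret L: normal L G by (rule L(1))
  interpret prob_space \<mu> by (rule prob_space_haar)
  have \<C>_rcosets: "\<C> \<subseteq> rcosets L" using \<C> by (simp add: FactGroup_def)
  have L_sets: "L \<in> sets \<mu>" using openin_sets_haar[OF L(2)] .
  have "measure \<mu> R = measure \<mu> L" if R: "R \<in> \<C>" for R
  proof -
    obtain g where g: "g \<in> carrier G" "R = L #> g"
      using R \<C>_rcosets by (auto simp: RCOSETS_def)
    then show ?thesis
      using haar L.coset_eq L_sets unfolding normalised_haar_measure_def by simp
  qed
  moreover have "measure \<mu> (\<Union>R\<in>\<C>. R) = (\<Sum>R\<in>\<C>. measure \<mu> R)"
  proof (rule finite_measure_finite_Union)
    show "finite \<C>"
      using finite_subset[OF \<C> finite_carrier_FactGroup[OF L]] .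
    show "(\<lambda>R. R) ` \<C> \<subseteq> sets \<mu>"
      using \<C>_rcosets openin_sets_haar openin_r_coset[OF L(2)] by (auto simp: RCOSETS_def)
    show "disjoint_family_on (\<lambda>R. R) \<C>"
      using rcos_disjoint[OF L.subgroup_axioms] \<C>_rcosets
      unfolding disjoint_family_on_def pairwise_def disjnt_def by blast
  qed
  ultimately show ?thesis by simp
qed

lemma measure_open_normal_subgroup:
  assumes "L \<lhd> G" "openin T L"
  shows "measure \<mu> L = 1 / real (card (carrier (G Mod L)))"
proof -
  interpret prob_space \<mu> by (rule prob_space_haar)
  have "\<Union>(carrier (G Mod L)) = space \<mu>"
    using haar rcosets_part_G[OF normal_imp_subgroup[OF assms(1)]]
    by (simp add: normalised_haar_measure_def FactGroup_def)
  then have "real (card (carrier (G Mod L))) * measure \<mu> L = 1"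
    using measure_Union_rcosets[OF assms order_refl] prob_space by simp
  then show ?thesis
    by (cases "card (carrier (G Mod L)) = 0") (simp_all add: eq_divide_eq mult.commute)
qed

lemma quot_centraliser_card_open:
  assumes "L \<lhd> G" "openin T L"
  shows "quot_centraliser_card G L x = enat (card (centraliser (G Mod L) (L #> x)))"
proof -
  have "centraliser (G Mod L) (L #> x) \<subseteq> carrier (G Mod L)"
    by (auto simp: centraliser_def)
  then show ?thesis
    using finite_subset finite_carrier_FactGroup[OF assms]
    by (auto simp: quot_centraliser_card_def ecard_def)
qed

lemma measure_set_mult_conj_class:
  assumes "L \<lhd> G" "openin T L" "x \<in> carrier G"
  shows "measure \<mu> (L <#> conj_class G x) = 1 / real (card (centraliser (G Mod L) (L #> x)))"
proof -
  interpret L: normal L G by (rule assms(1))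
  interpret Q: group "G Mod L" by (rule L.factorgroup_is_group)
  have fin: "finite (carrier (G Mod L))" by (rule finite_carrier_FactGroup[OF assms(1,2)])
  have xL: "L #> x \<in> carrier (G Mod L)"
    using assms(3) by (simp add: carrier_FactGroup)
  have "measure \<mu> (L <#> conj_class G x) = real (card (conj_class (G Mod L) (L #> x))) * measure \<mu> L"
    unfolding L.set_mult_conj_class_eq_Union[OF assms(3)]
    by (rule measure_Union_rcosets[OF assms(1,2) Q.conj_class_subset_carrier[OF xL]])
  also have "\<dots> = real (card (conj_class (G Mod L) (L #> x))) / real (order (G Mod L))"
    by (simp add: measure_open_normal_subgroup[OF assms(1,2)] order_def)
  also have "\<dots> = 1 / real (card (centraliser (G Mod L) (L #> x)))"
  proof -
    have "0 < order (G Mod L)" using fin Q.order_gt_0_iff_finite by blast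
    then show ?thesis
      unfolding Q.card_conj_class_mult_card_centraliser[OF xL, symmetric] by (simp add: field_simps)
  qed
  finally show ?thesis .
qed

lemma card_centraliser_FactGroup_antimono:
  assumes "N \<lhd> G" "openin T N" "L \<lhd> G" "openin T L" "N \<subseteq> L" "x \<in> carrier G"
  shows "card (centraliser (G Mod L) (L #> x)) \<le> card (centraliser (G Mod N) (N #> x))"
proof -
  interpret prob_space \<mu> by (rule prob_space_haar)
  have "measure \<mu> (N <#> conj_class G x) \<le> measure \<mu> (L <#> conj_class G x)"
    using assms(4,6) conj_class_subset_carrier
    by (intro finite_measure_mono mono_set_mult[OF assms(5) order_refl] openin_sets_haar openin_set_mult)
  moreover have "card (centraliser (G Mod N) (N #> x)) > 0" "card (centraliser (G Mod L) (L #> x)) > 0"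
    using group.card_centraliser_pos[OF normal.factorgroup_is_group finite_carrier_FactGroup]
      assms by (simp_all add: carrier_FactGroup)
  ultimately show ?thesis
    using measure_set_mult_conj_class assms by (simp add: field_simps)
qed

end

locale haar_open_normal_chain = haar_group + open_normal_chain
begin

lemma incseq_card_centraliser_chain:
  assumes "x \<in> carrier G"
  shows "incseq (\<lambda>i. card (centraliser (G Mod N i) (N i #> x)))"
  using card_centraliser_FactGroup_antimono[OF normal_chain openin_chain normal_chain openin_chain
      chain_Suc_subset assms]
  by (rule incseq_SucI)

lemma measure_conj_class_LIMSEQ:
  assumes "x \<in> carrier G"
  shows "(\<lambda>i. 1 / real (card (centraliser (G Mod N i) (N i #> x)))) \<longlonglongrightarrow> measure \<mu> (conj_class G x)"
proof -
  interpret prob_space \<mu> by (rule prob_space_haar)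
  have "(\<lambda>i. measure \<mu> (N i <#> conj_class G x)) \<longlonglongrightarrow> measure \<mu> (\<Inter>i. N i <#> conj_class G x)"
  proof (rule finite_Lim_measure_decseq)
    show "range (\<lambda>i. N i <#> conj_class G x) \<subseteq> sets \<mu>"
      using openin_sets_haar openin_set_mult[OF openin_chain conj_class_subset_carrier[OF assms]] by blast
    show "decseq (\<lambda>i. N i <#> conj_class G x)"
      using chain_Suc_subset by (intro decseq_SucI mono_set_mult) simp_all
  qed
  then show ?thesis
    using measure_set_mult_conj_class[OF normal_chain openin_chain assms]
      Inter_chain_set_mult[OF closedin_conj_class[OF assms]]
    by simp
qed

lemma eventually_inj_on_r_coset_chain:
  assumes K: "K \<lhd> G" "closedin T K"
    and C: "finite C" "C \<subseteq> carrier G" "inj_on (\<lambda>g. K #> g) C"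
  shows "\<forall>\<^sub>F i in sequentially. inj_on (\<lambda>g. (N i <#> K) #> g) C"
proof -
  have sub_K: "subgroup K G" by (rule normal_imp_subgroup[OF K(1)])
  have "\<forall>\<^sub>F i in sequentially. g \<noteq> h \<longrightarrow> g \<otimes> inv h \<notin> N i <#> K" if "g \<in> C" "h \<in> C" for g h
  proof (cases "g = h")
    case False
    then have "g \<otimes> inv h \<notin> K"
      using C(2,3) that rcos_eq_iff[OF sub_K] unfolding inj_on_def by blast
    then show ?thesis
      using eventually_notin_chain_set_mult[OF K(2)] eventually_mono by fastforce
  qed simp
  then have "\<forall>\<^sub>F i in sequentially. \<forall>g\<in>C. \<forall>h\<in>C. g \<noteq> h \<longrightarrow> g \<otimes> inv h \<notin> N i <#> K"
    using C(1) by (simp add: eventually_ball_finite_distrib)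
  then show ?thesis
  proof (rule eventually_mono)
    fix i assume separated: "\<forall>g\<in>C. \<forall>h\<in>C. g \<noteq> h \<longrightarrow> g \<otimes> inv h \<notin> N i <#> K"
    have "subgroup (N i <#> K) G"
      by (rule normal_imp_subgroup[OF normal_set_mult[OF normal_chain K(1)]])
    then show "inj_on (\<lambda>g. (N i <#> K) #> g) C"
      using separated C(2) rcos_eq_iff unfolding inj_on_def by blast
  qed
qed

lemma quot_centraliser_card_closed_le:
  assumes K: "K \<lhd> G" "closedin T K" and x: "x \<in> carrier G"
  shows "quot_centraliser_card G K x \<le> (SUP i. quot_centraliser_card G (N i) x)"
  unfolding quot_centraliser_card_def[of G K]
proof (rule ecard_leI)
  fix F assume F: "finite F" "F \<subseteq> centraliser (G Mod K) (K #> x)"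
  have "F \<subseteq> (\<lambda>g. K #> g) ` carrier G"
    using F(2) by (auto simp: centraliser_def carrier_FactGroup)
  then obtain C where C: "C \<subseteq> carrier G" "inj_on (\<lambda>g. K #> g) C" "F = (\<lambda>g. K #> g) ` C"
    by (auto simp: subset_image_inj)
  have "finite C" using F(1) C(2,3) finite_image_iff by blast
  then obtain i where inj: "inj_on (\<lambda>g. (N i <#> K) #> g) C"
    using eventually_inj_on_r_coset_chain[OF K _ C(1,2)] unfolding eventually_sequentially by blast
  define L where "L = N i <#> K"
  have L: "L \<lhd> G" "openin T L"
    unfolding L_def using normal_set_mult[OF normal_chain K(1)]
      openin_set_mult[OF openin_chain subgroup.subset[OF normal_imp_subgroup[OF K(1)]]] by simp_all
  have "K \<subseteq> L" "N i \<subseteq> L"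
    using subgroup.one_closed[OF subgroup_chain] subgroup.one_closed[OF normal_imp_subgroup[OF K(1)]]
      subgroup.subset[OF normal_imp_subgroup[OF K(1)]] subgroup.subset[OF subgroup_chain]
    unfolding L_def set_mult_def by force+
  have "card F = card ((\<lambda>g. L #> g) ` C)"
    using C(2,3) inj card_image unfolding L_def by metis
  also have "\<dots> \<le> card (centraliser (G Mod L) (L #> x))"
  proof (rule card_mono)
    show "finite (centraliser (G Mod L) (L #> x))"
      using finite_carrier_FactGroup[OF L] by (auto simp: centraliser_def)
    show "(\<lambda>g. L #> g) ` C \<subseteq> centraliser (G Mod L) (L #> x)"
      using centraliser_FactGroup_mono[OF K(1) L(1) \<open>K \<subseteq> L\<close> _ x] C F(2) by blast
  qed
  also have "\<dots> \<le> card (centraliser (G Mod N i) (N i #> x))"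
    by (rule card_centraliser_FactGroup_antimono[OF normal_chain openin_chain L \<open>N i \<subseteq> L\<close> x])
  finally have "enat (card F) \<le> quot_centraliser_card G (N i) x"
    using quot_centraliser_card_open[OF normal_chain openin_chain] by simp
  also have "\<dots> \<le> (SUP i. quot_centraliser_card G (N i) x)"
    by (rule SUP_upper) simp
  finally show "enat (card F) \<le> (SUP i. quot_centraliser_card G (N i) x)" .
qed

lemma SUP_quot_centraliser_card_chain_eq:
  assumes "x \<in> carrier G"
  shows "(SUP i. quot_centraliser_card G (N i) x)
      = (SUP K\<in>{K. K \<lhd> G \<and> openin T K}. quot_centraliser_card G K x)"
    and "(SUP K\<in>{K. K \<lhd> G \<and> openin T K}. quot_centraliser_card G K x)
      = (SUP K\<in>{K. K \<lhd> G \<and> closedin T K}. quot_centraliser_card G K x)"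
proof -
  let ?q = "\<lambda>K. quot_centraliser_card G K x"
  have chain_le_open: "(SUP i. ?q (N i)) \<le> (SUP K\<in>{K. K \<lhd> G \<and> openin T K}. ?q K)"
    using normal_chain openin_chain by (intro SUP_mono) blast
  have open_le_closed:
    "(SUP K\<in>{K. K \<lhd> G \<and> openin T K}. ?q K) \<le> (SUP K\<in>{K. K \<lhd> G \<and> closedin T K}. ?q K)"
    using closedin_open_subgroup normal_imp_subgroup by (intro SUP_mono) blast
  have closed_le_chain: "(SUP K\<in>{K. K \<lhd> G \<and> closedin T K}. ?q K) \<le> (SUP i. ?q (N i))"
    using quot_centraliser_card_closed_le[OF _ _ assms] by (intro SUP_least) blast
  show "(SUP i. ?q (N i)) = (SUP K\<in>{K. K \<lhd> G \<and> openin T K}. ?q K)"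
    using chain_le_open open_le_closed closed_le_chain by (rule antisym[OF _ order_trans])
  show "(SUP K\<in>{K. K \<lhd> G \<and> openin T K}. ?q K) = (SUP K\<in>{K. K \<lhd> G \<and> closedin T K}. ?q K)"
    using open_le_closed closed_le_chain chain_le_open by (rule antisym[OF _ order_trans])
qed

lemma measure_conj_class:
  assumes "x \<in> carrier G"
  shows "measure \<mu> (conj_class G x)
    = (let c = SUP i. quot_centraliser_card G (N i) x in if c = \<infinity> then 0 else 1 / real (the_enat c))"
proof -
  have "(SUP i. quot_centraliser_card G (N i) x) = (SUP i. enat (card (centraliser (G Mod N i) (N i #> x))))"
    using quot_centraliser_card_open[OF normal_chain openin_chain] by simp
  then show ?thesis
    using LIMSEQ_unique[OF measure_conj_class_LIMSEQ[OF assms]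
        LIMSEQ_one_divide_incseq[OF incseq_card_centraliser_chain[OF assms]]]
    by simp
qed

end

theorem proposition5p1:
  fixes G :: "('a, 'b) monoid_scheme" and T :: "'a topology" and M :: "'a measure"
    and x :: 'a and N :: "nat \<Rightarrow> 'a set"
  assumes "profinite_group G T"
    and "second_countable T"
    and "normalised_haar_measure G T M"
    and "x \<in> carrier G"
    and "\<And>i. i \<ge> 1 \<Longrightarrow> N i \<lhd> G \<and> openin T (N i)"
    and "\<And>i. i \<ge> 1 \<Longrightarrow> N (Suc i) \<subseteq> N i"
    and "(\<Inter>i\<in>{1..}. N i) = {\<one>\<^bsub>G\<^esub>}"
  shows "let c1 = (SUP i\<in>{1..}. quot_centraliser_card G (N i) x);
             c2 = (SUP K\<in>{K. K \<lhd> G \<and> openin T K}. quot_centraliser_card G K x);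
             c3 = (SUP K\<in>{K. K \<lhd> G \<and> closedin T K}. quot_centraliser_card G K x)
         in c1 = c2 \<and> c2 = c3 \<and>
            measure M (conj_class G x) = (if c1 = \<infinity> then 0 else 1 / real (the_enat c1))"
proof -
  have "{1::nat..} = range Suc"
    using greaterThan_0 atLeast_Suc_greaterThan[of 0] by simp
  then have Inter_Suc: "(\<Inter>i. N (Suc i)) = {\<one>\<^bsub>G\<^esub>}"
    using assms(7) by (simp add: image_image)
  interpret haar_open_normal_chain G T M "\<lambda>i. N (Suc i)"
    unfolding haar_open_normal_chain_def haar_group_def haar_group_axioms_def
      open_normal_chain_def open_normal_chain_axioms_def compact_group_def compact_group_axioms_def
      group_topology_def group_topology_axioms_def
    using assms(1,3,5,6) Inter_Suc by (auto simp: profinite_group_def topological_group_def)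
  have "(SUP i\<in>{1..}. quot_centraliser_card G (N i) x) = (SUP i. quot_centraliser_card G (N (Suc i)) x)"
    using \<open>{1..} = range Suc\<close> by (simp add: image_image)
  then show ?thesis
    using SUP_quot_centraliser_card_chain_eq[OF assms(4)] measure_conj_class[OF assms(4)]
    by (simp add: Let_def)
qed

end
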